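(* Let $(X_n)_{n\ge0}$ be a stationary $\beta$-mixing sequence of $\mathbb{R}^d$-valued random variables such that $X_1$ is supported on a compact set $\mathbb{M}$. Then for any $\epsilon>0$ and any sequences of positive integers $k_n,r_n$ with $k_nr_n\le n$, $$\mathbb{P}\big(d_H(\mathbb{X}_n,\mathbb{M})>\epsilon\big)\le\frac{k_n^2\beta_{r_n}+k_n\exp\big(-[\tfrac{k_n}{2}]\rho_{r_n}(\epsilon/2)\big)}{k_n\rho_{r_n}(\epsilon/4)}.$$ Suppose moreover that for some $b>1$ and every sufficiently small $\epsilon>0$, $$\lim_{m\to\infty}\rho_m(\epsilon)\frac{e^{m^{b}}}{m^{1+b}}=\infty\quad\text{and}\quad\lim_{m\to\infty}\frac{e^{2m^{b}}}{m^2}\beta_m=0.$$ Then $(X_n)_{n\ge0}$ is asymptotically $(\epsilon,\alpha)$-dense in $\mathbb{M}$.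
   Context: The $\beta$-mixing coefficients are $\beta_n=\sup_{l\ge1}\mathbb{E}\big\{\sup_{B\in\sigma(X_i,i\ge l+n)}|\mathbb{P}(B\mid\sigma(X_1,\ldots,X_l))-\mathbb{P}(B)|\big\}$, and the sequence is $\beta$-mixing if $\beta_n\to0$. $\mathbb{X}_n=\{X_1,\ldots,X_n\}$; $[\cdot]$ is the integer part. For $p\ge1$, $\rho_p(\epsilon)=\inf_{x\in\mathbb{M}_{dp}}\mathbb{P}(\|(X_1,\ldots,X_p)^t-x\|\le\epsilon)$, with $\mathbb{M}_{dp}$ the support (smallest closed set of full mass) of $(X_1,\ldots,X_p)^t$. $d_H$ is the Hausdorff distance. The sequence is asymptotically $(\epsilon,\alpha)$-dense in $\mathbb{M}$ if for every sufficiently small $\epsilon>0$ and every $\alpha\in(0,1)$ there exists $n_0$ such that for all $n\ge n_0$, $\mathbb{P}(d_H(\mathbb{X}_n,\mathbb{M})\le\epsilon)\ge1-\alpha$. (The paper uses the letter $\beta$ for the exponent $b$; renamed here to avoid clash with the mixing coefficients.) *)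

theory Defs
  imports "HOL-Probability.Probability"
begin

definition hausdorff_dist :: "'a::metric_space set \<Rightarrow> 'a set \<Rightarrow> real" where
  "hausdorff_dist A B = max (SUP a\<in>A. infdist a B) (SUP b\<in>B. infdist b A)"

definition gen_sigma :: "'a measure \<Rightarrow> (nat \<Rightarrow> 'a \<Rightarrow> 'b::topological_space) \<Rightarrow> nat set \<Rightarrow> 'a set set" where
  "gen_sigma M X I = sigma_sets (space M) (\<Union>i\<in>I. {X i -` B \<inter> space M | B. B \<in> sets borel})"

definition fin_partition :: "'a measure \<Rightarrow> 'a set set \<Rightarrow> nat \<Rightarrow> (nat \<Rightarrow> 'a set) \<Rightarrow> bool" where
  "fin_partition M F m A \<longleftrightarrow> (\<forall>i<m. A i \<in> F) \<and> disjoint_family_on A {..<m}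
      \<and> (\<Union>i<m. A i) = space M"

text \<open>Absolute regularity (beta) coefficient between two sub-sigma-algebras F and G
  (Volkonskii--Rozanov form).\<close>
definition beta_coeff :: "'a measure \<Rightarrow> 'a set set \<Rightarrow> 'a set set \<Rightarrow> real" where
  "beta_coeff M F G = Sup {(1/2) * (\<Sum>i<m. \<Sum>j<m'.
        \<bar>measure M (A i \<inter> B j) - measure M (A i) * measure M (B j)\<bar>) | m m' A B.
        fin_partition M F m A \<and> fin_partition M G m' B}"

definition beta_mix :: "'a measure \<Rightarrow> (nat \<Rightarrow> 'a \<Rightarrow> 'b::topological_space) \<Rightarrow> nat \<Rightarrow> real" where
  "beta_mix M X n = (SUP l\<in>{1..}. beta_coeff M (gen_sigma M X {1..l}) (gen_sigma M X {l+n..}))"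

definition stationary :: "'a measure \<Rightarrow> (nat \<Rightarrow> 'a \<Rightarrow> 'b::topological_space) \<Rightarrow> bool" where
  "stationary M X \<longleftrightarrow> (\<forall>l k.
     distr M (PiM {..<k} (\<lambda>_. borel)) (\<lambda>\<omega>. restrict (\<lambda>i. X (l + i) \<omega>) {..<k})
   = distr M (PiM {..<k} (\<lambda>_. borel)) (\<lambda>\<omega>. restrict (\<lambda>i. X i \<omega>) {..<k}))"

definition rv_support :: "'a measure \<Rightarrow> ('a \<Rightarrow> 'b::topological_space) \<Rightarrow> 'b set" where
  "rv_support M Y = \<Inter>{C. closed C \<and> (AE \<omega> in M. Y \<omega> \<in> C)}"

text \<open>R^{dp} is represented by functions x :: nat => 'b with x i = 0 for i >= p
  (x i is the i+1-st block of d coordinates), with the Euclidean norm.\<close>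
definition blk_space :: "nat \<Rightarrow> (nat \<Rightarrow> 'b::euclidean_space) set" where
  "blk_space p = {x. \<forall>i\<ge>p. x i = 0}"

definition blk_dist :: "nat \<Rightarrow> (nat \<Rightarrow> 'b::euclidean_space) \<Rightarrow> (nat \<Rightarrow> 'b) \<Rightarrow> real" where
  "blk_dist p x y = sqrt (\<Sum>i<p. (norm (x i - y i))\<^sup>2)"

definition blk_closed :: "nat \<Rightarrow> (nat \<Rightarrow> 'b::euclidean_space) set \<Rightarrow> bool" where
  "blk_closed p C \<longleftrightarrow> C \<subseteq> blk_space p \<and>
     (\<forall>x\<in>blk_space p. (\<forall>\<delta>>0. \<exists>y\<in>C. blk_dist p x y < \<delta>) \<longrightarrow> x \<in> C)"

definition blk_vec :: "(nat \<Rightarrow> 'a \<Rightarrow> 'b::euclidean_space) \<Rightarrow> nat \<Rightarrow> 'a \<Rightarrow> nat \<Rightarrow> 'b" where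
  "blk_vec X p \<omega> = (\<lambda>i. if i < p then X (i + 1) \<omega> else 0)"

definition blk_support :: "'a measure \<Rightarrow> (nat \<Rightarrow> 'a \<Rightarrow> 'b::euclidean_space) \<Rightarrow> nat \<Rightarrow> (nat \<Rightarrow> 'b) set" where
  "blk_support M X p = \<Inter>{C. blk_closed p C \<and> (AE \<omega> in M. blk_vec X p \<omega> \<in> C)} \<inter> blk_space p"

definition rho :: "'a measure \<Rightarrow> (nat \<Rightarrow> 'a \<Rightarrow> 'b::euclidean_space) \<Rightarrow> nat \<Rightarrow> real \<Rightarrow> real" where
  "rho M X p \<epsilon> = (INF x\<in>blk_support M X p.
      measure M {\<omega>\<in>space M. blk_dist p (blk_vec X p \<omega>) x \<le> \<epsilon>})"

definition sample :: "(nat \<Rightarrow> 'a \<Rightarrow> 'b) \<Rightarrow> nat \<Rightarrow> 'a \<Rightarrow> 'b set" where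
  "sample X n \<omega> = (\<lambda>i. X i \<omega>) ` {1..n}"

definition asympt_dense :: "'a measure \<Rightarrow> (nat \<Rightarrow> 'a \<Rightarrow> 'b::metric_space) \<Rightarrow> 'b set \<Rightarrow> bool" where
  "asympt_dense M X S \<longleftrightarrow> (\<exists>\<epsilon>0>0. \<forall>\<epsilon>. 0 < \<epsilon> \<and> \<epsilon> < \<epsilon>0 \<longrightarrow> (\<forall>\<alpha>. 0 < \<alpha> \<and> \<alpha> < 1 \<longrightarrow>
     (\<exists>n0. \<forall>n\<ge>n0. measure M {\<omega>\<in>space M. hausdorff_dist (sample X n \<omega>) S \<le> \<epsilon>} \<ge> 1 - \<alpha>)))"

end

theory Submission
  imports Defs
begin

(* Fix a block length r. Among the block values in the support of (X_1, ..., X_r) take a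
   maximal set S whose points are more than epsilon/2 apart: the epsilon/4-balls around S are
   disjoint and each has probability at least rho_r(epsilon/4), so |S| <= 1/rho_r(epsilon/4),
   and by maximality every block value lies within epsilon/2 of S. The sample is epsilon-dense
   in the support of X_1 as soon as, for every c in S, one of the [k/2] blocks starting at
   2jr + 1 comes within epsilon/2 of c. These blocks are separated by gaps of length r, so by
   stationarity and beta-mixing all of them miss c with probability at most
   (1 - rho_r(epsilon/2))^[k/2] + k beta_r; a union bound over S gives the inequality.
   For the density statement take r = m and k = ceil(exp(m^b)): the growth hypotheses make
   both terms of the bound arbitrarily small for large m. *)

lemma blk_dist_eq_L2_set: "blk_dist p x y = L2_set (\<lambda>i. norm (x i - y i)) {..<p}"
  unfolding blk_dist_def L2_set_def by simp

lemma blk_dist_commute: "blk_dist p x y = blk_dist p y x"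
  unfolding blk_dist_def by (simp add: norm_minus_commute)

lemma blk_dist_self [simp]: "blk_dist p x x = 0"
  unfolding blk_dist_def by simp

lemma blk_dist_triangle: "blk_dist p x z \<le> blk_dist p x y + blk_dist p y z"
proof -
  have "blk_dist p x z \<le> L2_set (\<lambda>i. norm (x i - y i) + norm (y i - z i)) {..<p}"
    unfolding blk_dist_eq_L2_set by (rule L2_set_mono) (auto intro: norm_diff_triangle_le)
  also have "\<dots> \<le> blk_dist p x y + blk_dist p y z"
    unfolding blk_dist_eq_L2_set by (rule L2_set_triangle_ineq)
  finally show ?thesis .
qed

lemma norm_le_blk_dist: "i < p \<Longrightarrow> norm (x i - y i) \<le> blk_dist p x y"
  unfolding blk_dist_eq_L2_set by (rule member_le_L2_set) auto

lemma blk_dist_le_sum: "blk_dist p x y \<le> (\<Sum>i<p. norm (x i - y i))"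
  unfolding blk_dist_eq_L2_set by (rule L2_set_le_sum) auto

lemma blk_dist_cong: "(\<And>i. i < p \<Longrightarrow> x i = x' i) \<Longrightarrow> blk_dist p x c = blk_dist p x' c"
  unfolding blk_dist_def by simp

lemma borel_measurable_blk_dist [measurable]:
  assumes "\<And>i. i < p \<Longrightarrow> (\<lambda>\<omega>. f \<omega> i) \<in> borel_measurable N"
  shows "(\<lambda>\<omega>. blk_dist p (f \<omega>) c) \<in> borel_measurable N"
  unfolding blk_dist_def using assms by measurable

definition blk_grid :: "nat \<Rightarrow> 'b set \<Rightarrow> (nat \<Rightarrow> 'b::zero) set" where
  "blk_grid p D = (\<lambda>f i. if i < p then f i else 0) ` PiE {..<p} (\<lambda>_. D)"

lemma countable_blk_grid: "countable D \<Longrightarrow> countable (blk_grid p D)"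
  unfolding blk_grid_def by (intro countable_image countable_PiE) auto

lemma finite_blk_grid: "finite D \<Longrightarrow> finite (blk_grid p D)"
  unfolding blk_grid_def by (auto intro!: finite_PiE)

lemma blk_grid_approx:
  fixes x :: "nat \<Rightarrow> 'b::euclidean_space"
  assumes "0 < p" and "\<And>i. i < p \<Longrightarrow> \<exists>d\<in>D. dist (x i) d < \<eta>"
  shows "\<exists>c\<in>blk_grid p D. blk_dist p x c < p * \<eta>"
proof -
  obtain f where f: "\<And>i. i < p \<Longrightarrow> f i \<in> D \<and> dist (x i) (f i) < \<eta>"
    using assms(2) by metis
  define c where "c = (\<lambda>i. if i < p then f i else 0)"
  have "c \<in> blk_grid p D"
    unfolding blk_grid_def c_def by (rule image_eqI[where x = "restrict f {..<p}"]) (auto simp: f)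
  moreover have "blk_dist p x c < p * \<eta>"
  proof -
    have "blk_dist p x c \<le> (\<Sum>i<p. norm (x i - c i))"
      by (rule blk_dist_le_sum)
    also have "\<dots> < (\<Sum>i<p. \<eta>)"
      by (rule sum_strict_mono) (use assms(1) f in \<open>auto simp: c_def dist_norm\<close>)
    finally show ?thesis by simp
  qed
  ultimately show ?thesis by blast
qed

lemma hausdorff_dist_le_iff:
  fixes S T :: "'b::metric_space set"
  assumes S: "finite S" "S \<noteq> {}" and T: "compact T" "T \<noteq> {}"
  shows "hausdorff_dist S T \<le> e \<longleftrightarrow> (\<forall>a\<in>S. infdist a T \<le> e) \<and> (\<forall>b\<in>T. infdist b S \<le> e)"
proof -
  have "bdd_above ((\<lambda>a. infdist a T) ` S)"
    using S by (intro bdd_above_finite) simp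
  moreover have "bdd_above ((\<lambda>b. infdist b S) ` T)"
    using compact_continuous_image[OF continuous_on_infdist[OF continuous_on_id] T(1)]
    by (intro bounded_imp_bdd_above compact_imp_bounded)
  ultimately show ?thesis
    unfolding hausdorff_dist_def max.bounded_iff using S(2) T(2) by (simp add: cSUP_le_iff)
qed

lemma infdist_le_iff_finite:
  fixes S :: "'b::heine_borel set"
  assumes "finite S" "S \<noteq> {}"
  shows "infdist b S \<le> e \<longleftrightarrow> (\<exists>s\<in>S. dist b s \<le> e)"
proof
  assume "infdist b S \<le> e"
  moreover obtain s where "s \<in> S" "infdist b S = dist b s"
    using infdist_attains_inf[OF finite_imp_closed[OF assms(1)] assms(2)] by metis
  ultimately show "\<exists>s\<in>S. dist b s \<le> e" by auto
qed (use infdist_le2 in blast)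

section \<open>Absolute regularity coefficients\<close>

text \<open>Viewing \<open>gen_sigma M X J\<close> as a measure space makes the measurability prover
  available for it.\<close>
definition gen_sigma_measure ::
    "'a measure \<Rightarrow> (nat \<Rightarrow> 'a \<Rightarrow> 'b::topological_space) \<Rightarrow> nat set \<Rightarrow> 'a measure" where
  "gen_sigma_measure M X J = sigma (space M) (\<Union>i\<in>J. {X i -` B \<inter> space M | B. B \<in> sets borel})"

lemma sets_gen_sigma_measure [simp]: "sets (gen_sigma_measure M X J) = gen_sigma M X J"
  unfolding gen_sigma_measure_def gen_sigma_def by (rule sets_measure_of) auto

lemma space_gen_sigma_measure [simp]: "space (gen_sigma_measure M X J) = space M"
  unfolding gen_sigma_measure_def by (rule space_measure_of) auto

lemma measurable_gen_sigma_measure: "i \<in> J \<Longrightarrow> X i \<in> borel_measurable (gen_sigma_measure M X J)"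
  unfolding measurable_def by (auto simp: gen_sigma_def)

lemma space_in_gen_sigma: "space M \<in> gen_sigma M X J"
  unfolding gen_sigma_def by (rule sigma_sets_top)

lemma sigma_algebra_gen_sigma: "sigma_algebra (space M) (gen_sigma M X J)"
  using sets.sigma_algebra_axioms[of "gen_sigma_measure M X J"] by simp

definition block_near ::
    "'a measure \<Rightarrow> (nat \<Rightarrow> 'a \<Rightarrow> 'b::euclidean_space) \<Rightarrow> nat \<Rightarrow> nat \<Rightarrow> (nat \<Rightarrow> 'b) \<Rightarrow> real \<Rightarrow> 'a set" where
  "block_near M X s p c d = {\<omega>\<in>space M. blk_dist p (\<lambda>i. X (s + i) \<omega>) c \<le> d}"

lemma block_near_in_gen_sigma:
  assumes "{s..<s + p} \<subseteq> J"
  shows "block_near M X s p c d \<in> gen_sigma M X J"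
proof -
  have "(\<lambda>\<omega>. blk_dist p (\<lambda>i. X (s + i) \<omega>) c) \<in> borel_measurable (gen_sigma_measure M X J)"
    using assms by (intro borel_measurable_blk_dist measurable_gen_sigma_measure) auto
  then have "{\<omega>\<in>space (gen_sigma_measure M X J). blk_dist p (\<lambda>i. X (s + i) \<omega>) c \<le> d}
      \<in> sets (gen_sigma_measure M X J)"
    by measurable
  then show ?thesis by (simp add: block_near_def)
qed

lemma blocks_miss_in_gen_sigma:
  "{\<omega>\<in>space M. \<forall>j<m. \<omega> \<notin> block_near M X (2*j*r + 1) r c d} \<in> gen_sigma M X {1..2*m*r - r}"
proof -
  interpret sigma_algebra "space M" "gen_sigma M X {1..2*m*r - r}"
    by (rule sigma_algebra_gen_sigma)
  have "block_near M X (2*j*r + 1) r c d \<in> gen_sigma M X {1..2*m*r - r}" if "j < m" for j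
  proof (rule block_near_in_gen_sigma)
    have "2*(j + 1)*r \<le> 2*m*r" using that by (intro mult_right_mono) auto
    then show "{2*j*r + 1..<2*j*r + 1 + r} \<subseteq> {1..2*m*r - r}" by (auto simp: algebra_simps)
  qed
  then have "space M - (\<Union>j<m. block_near M X (2*j*r + 1) r c d) \<in> gen_sigma M X {1..2*m*r - r}"
    by (intro Diff top finite_UN) auto
  also have "space M - (\<Union>j<m. block_near M X (2*j*r + 1) r c d)
      = {\<omega>\<in>space M. \<forall>j<m. \<omega> \<notin> block_near M X (2*j*r + 1) r c d}"
    by auto
  finally show ?thesis .
qed

lemma fin_partition_two:
  assumes "sigma_algebra (space M) F" "A \<in> F"
  shows "fin_partition M F 2 (\<lambda>i. if i = 0 then A else space M - A)"
proof -
  interpret sigma_algebra "space M" F by fact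
  have "{..<2::nat} = {0, 1}" by auto
  then show ?thesis
    using assms(2) sets_into_space[OF assms(2)]
    unfolding fin_partition_def by (auto simp: disjoint_family_on_def)
qed

context prob_space
begin

lemma partition_covariance_le_2:
  assumes A: "fin_partition M F m A" and B: "fin_partition M G m' B"
    and F: "F \<subseteq> events" and G: "G \<subseteq> events"
  shows "(\<Sum>i<m. \<Sum>j<m'. \<bar>prob (A i \<inter> B j) - prob (A i) * prob (B j)\<bar>) \<le> 2"
proof -
  have A_ev: "\<And>i. i < m \<Longrightarrow> A i \<in> events" and B_ev: "\<And>j. j < m' \<Longrightarrow> B j \<in> events"
    using A B F G unfolding fin_partition_def by auto
  have A_disj: "disjoint_family_on A {..<m}" and B_disj: "disjoint_family_on B {..<m'}"
    and A_cover: "(\<Union>i<m. A i) = space M" and B_cover: "(\<Union>j<m'. B j) = space M"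
    using A B unfolding fin_partition_def by auto
  have sum_A: "(\<Sum>i<m. prob (A i)) = 1"
    using finite_measure_finite_Union[of "{..<m}" A] A_ev A_disj A_cover prob_space by auto
  have sum_B: "(\<Sum>j<m'. prob (B j)) = 1"
    using finite_measure_finite_Union[of "{..<m'}" B] B_ev B_disj B_cover prob_space by auto
  have sum_AB: "(\<Sum>j<m'. prob (A i \<inter> B j)) = prob (A i)" if i: "i < m" for i
  proof -
    have "(\<Sum>j<m'. prob (A i \<inter> B j)) = prob (\<Union>j<m'. A i \<inter> B j)"
      using B_disj A_ev B_ev i
      by (intro finite_measure_finite_Union[symmetric]) (auto simp: disjoint_family_on_def)
    also have "(\<Union>j<m'. A i \<inter> B j) = A i"
      using B_cover sets.sets_into_space[OF A_ev[OF i]] by auto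
    finally show ?thesis .
  qed
  have "(\<Sum>i<m. \<Sum>j<m'. \<bar>prob (A i \<inter> B j) - prob (A i) * prob (B j)\<bar>)
     \<le> (\<Sum>i<m. \<Sum>j<m'. prob (A i \<inter> B j) + prob (A i) * prob (B j))"
    by (intro sum_mono) (auto simp: abs_le_iff)
  also have "\<dots> = (\<Sum>i<m. prob (A i)) + (\<Sum>i<m. prob (A i)) * (\<Sum>j<m'. prob (B j))"
    by (simp add: sum.distrib sum_AB sum_product)
  finally show ?thesis using sum_A sum_B by simp
qed

lemma
  assumes F: "F \<subseteq> events" and G: "G \<subseteq> events"
    and A: "fin_partition M F m A" and B: "fin_partition M G m' B"
  shows partition_covariance_le_beta_coeff:
      "(1/2) * (\<Sum>i<m. \<Sum>j<m'. \<bar>prob (A i \<inter> B j) - prob (A i) * prob (B j)\<bar>) \<le> beta_coeff M F G"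
    and beta_coeff_le_1: "beta_coeff M F G \<le> 1"
proof -
  define S where "S = {(1/2) * (\<Sum>i<k. \<Sum>j<k'. \<bar>prob (P i \<inter> Q j) - prob (P i) * prob (Q j)\<bar>)
    | k k' P Q. fin_partition M F k P \<and> fin_partition M G k' Q}"
  have beta: "beta_coeff M F G = Sup S"
    unfolding beta_coeff_def S_def ..
  have S_le_1: "x \<le> 1" if "x \<in> S" for x
  proof -
    from that obtain k k' P Q
      where "x = (1/2) * (\<Sum>i<k. \<Sum>j<k'. \<bar>prob (P i \<inter> Q j) - prob (P i) * prob (Q j)\<bar>)"
        and "fin_partition M F k P" "fin_partition M G k' Q"
      unfolding S_def mem_Collect_eq by (elim exE conjE)
    with partition_covariance_le_2[OF _ _ F G] show ?thesis by fastforce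
  qed
  have in_S: "(1/2) * (\<Sum>i<m. \<Sum>j<m'. \<bar>prob (A i \<inter> B j) - prob (A i) * prob (B j)\<bar>) \<in> S"
    unfolding S_def using A B by blast
  show "(1/2) * (\<Sum>i<m. \<Sum>j<m'. \<bar>prob (A i \<inter> B j) - prob (A i) * prob (B j)\<bar>) \<le> beta_coeff M F G"
    unfolding beta using in_S S_le_1 by (intro cSup_upper bdd_aboveI)
  show "beta_coeff M F G \<le> 1"
    unfolding beta using in_S S_le_1 by (intro cSup_least) auto
qed

lemma covariance_le_beta_coeff:
  assumes "sigma_algebra (space M) F" "F \<subseteq> events"
    and "sigma_algebra (space M) G" "G \<subseteq> events"
    and "A \<in> F" "B \<in> G"
  shows "\<bar>prob (A \<inter> B) - prob A * prob B\<bar> \<le> beta_coeff M F G"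
proof -
  define d where "d = prob (A \<inter> B) - prob A * prob B"
  define A' where "A' = (\<lambda>i::nat. if i = 0 then A else space M - A)"
  define B' where "B' = (\<lambda>j::nat. if j = 0 then B else space M - B)"
  have A: "A \<in> events" and B: "B \<in> events" using assms by auto
  have "prob (A \<inter> (space M - B)) = prob A - prob (A \<inter> B)"
    using A B finite_measure_Diff[of A "A \<inter> B"] by (simp add: Diff_Int_distrib)
  moreover have "prob ((space M - A) \<inter> B) = prob B - prob (A \<inter> B)"
  proof -
    have "(space M - A) \<inter> B = B - A \<inter> B" using sets.sets_into_space[OF B] by auto
    then show ?thesis using A B finite_measure_Diff[of B "A \<inter> B"] by simp
  qed
  moreover have "prob ((space M - A) \<inter> (space M - B)) = 1 - prob A - prob B + prob (A \<inter> B)"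
  proof -
    have "(space M - A) \<inter> (space M - B) = space M - (A \<union> B)" by auto
    then show ?thesis
      using A B prob_compl[of "A \<union> B"] measure_Un3[of A M B] by (simp add: fmeasurable_eq_sets)
  qed
  \<comment> \<open>every cell of the 2x2 table deviates from independence by \<plusminus>d\<close>
  ultimately have cell: "\<bar>prob (A' i \<inter> B' j) - prob (A' i) * prob (B' j)\<bar> = \<bar>d\<bar>"
    if "i < 2" "j < 2" for i j
    using that A B by (auto simp: less_2_cases_iff A'_def B'_def d_def prob_compl algebra_simps)
  have "\<bar>d\<bar> \<le> 2 * \<bar>d\<bar>" by simp
  also have "\<dots> = (1/2) * (\<Sum>i<2. \<Sum>j<2. \<bar>prob (A' i \<inter> B' j) - prob (A' i) * prob (B' j)\<bar>)"
    by (simp add: cell)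
  also have "\<dots> \<le> beta_coeff M F G"
    unfolding A'_def B'_def using assms
    by (intro partition_covariance_le_beta_coeff fin_partition_two) auto
  finally show ?thesis unfolding d_def .
qed

lemma beta_coeff_nonneg:
  assumes "sigma_algebra (space M) F" "F \<subseteq> events" "sigma_algebra (space M) G" "G \<subseteq> events"
  shows "0 \<le> beta_coeff M F G"
proof -
  interpret F: sigma_algebra "space M" F by fact
  interpret G: sigma_algebra "space M" G by fact
  show ?thesis
    using covariance_le_beta_coeff[OF assms F.top G.top] by (simp add: prob_space)
qed

end

locale random_sequence = prob_space M for M :: "'a measure" +
  fixes X :: "nat \<Rightarrow> 'a \<Rightarrow> 'b::euclidean_space"
  assumes measurable_X [measurable]: "\<And>i. X i \<in> borel_measurable M"
begin

lemma gen_sigma_subset_events: "gen_sigma M X J \<subseteq> events"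
  unfolding gen_sigma_def by (rule sets.sigma_sets_subset) auto

lemma block_near_in_events: "block_near M X s p c d \<in> events"
  using block_near_in_gen_sigma[of s p "{s..<s + p}" M X c d] gen_sigma_subset_events by auto

lemma beta_coeff_le_beta_mix:
  assumes "1 \<le> l"
  shows "beta_coeff M (gen_sigma M X {1..l}) (gen_sigma M X {l + n..}) \<le> beta_mix M X n"
proof -
  have "beta_coeff M (gen_sigma M X I) (gen_sigma M X J) \<le> 1" for I J
    by (rule beta_coeff_le_1[OF gen_sigma_subset_events gen_sigma_subset_events
          fin_partition_two[OF sigma_algebra_gen_sigma space_in_gen_sigma]
          fin_partition_two[OF sigma_algebra_gen_sigma space_in_gen_sigma]])
  then show ?thesis
    unfolding beta_mix_def using assms by (intro cSUP_upper bdd_aboveI2) auto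
qed

lemma beta_mix_nonneg: "0 \<le> beta_mix M X n"
proof -
  have "0 \<le> beta_coeff M (gen_sigma M X {1..1}) (gen_sigma M X {1 + n..})"
    by (intro beta_coeff_nonneg sigma_algebra_gen_sigma gen_sigma_subset_events)
  also have "\<dots> \<le> beta_mix M X n"
    by (rule beta_coeff_le_beta_mix) simp
  finally show ?thesis .
qed

lemma prob_Int_le_beta_mix:
  assumes "1 \<le> l" "A \<in> gen_sigma M X {1..l}" "B \<in> gen_sigma M X {l + n..}"
  shows "prob (A \<inter> B) \<le> prob A * prob B + beta_mix M X n"
  using covariance_le_beta_coeff[OF sigma_algebra_gen_sigma gen_sigma_subset_events
      sigma_algebra_gen_sigma gen_sigma_subset_events assms(2,3)]
    beta_coeff_le_beta_mix[OF assms(1), of n]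
  by linarith

end

section \<open>Supports\<close>

context prob_space
begin

lemma closed_rv_support: "closed (rv_support M Y)"
  unfolding rv_support_def by (rule closed_Inter) blast

lemma AE_in_rv_support:
  fixes Y :: "'a \<Rightarrow> 'c::second_countable_topology"
  shows "AE \<omega> in M. Y \<omega> \<in> rv_support M Y"
proof -
  obtain \<B> :: "'c set set" where \<B>: "countable \<B>" "\<And>S. open S \<Longrightarrow> \<exists>\<U>. \<U> \<subseteq> \<B> \<and> S = \<Union>\<U>"
    by (rule univ_second_countable) blast
  define T where "T = {U\<in>\<B>. AE \<omega> in M. Y \<omega> \<notin> U}"
  have "countable T" using \<B>(1) unfolding T_def by simp
  then have ae: "AE \<omega> in M. \<forall>U\<in>T. Y \<omega> \<notin> U"
    by (rule AE_ball_countable'[rotated]) (auto simp: T_def)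
  have support: "y \<in> rv_support M Y" if y: "\<forall>U\<in>T. y \<notin> U" for y
    unfolding rv_support_def
  proof (rule InterI, clarify)
    fix C assume C: "closed C" "AE \<omega> in M. Y \<omega> \<in> C"
    show "y \<in> C"
    proof (rule ccontr)
      assume "y \<notin> C"
      obtain \<U> where \<U>: "\<U> \<subseteq> \<B>" "- C = \<Union>\<U>"
        using \<B>(2)[of "- C"] C(1) by (auto simp: open_Compl)
      then obtain V where V: "V \<in> \<U>" "y \<in> V" using \<open>y \<notin> C\<close> by auto
      have "AE \<omega> in M. Y \<omega> \<notin> V" using C(2) by eventually_elim (use \<U> V in auto)
      then have "V \<in> T" using \<U> V unfolding T_def by auto
      then show False using y V by auto
    qed
  qed
  from ae show ?thesis by eventually_elim (use support in auto)
qed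

lemma rv_support_nonempty:
  fixes Y :: "'a \<Rightarrow> 'c::second_countable_topology"
  shows "rv_support M Y \<noteq> {}"
  using eventually_happens'[OF ae_filter_bot AE_in_rv_support[of Y]] by blast

lemma not_AE_far_from_rv_support:
  assumes "b \<in> rv_support M Y" "0 < \<eta>"
  shows "\<not> (AE \<omega> in M. \<eta> \<le> dist (Y \<omega>) b)"
proof
  assume "AE \<omega> in M. \<eta> \<le> dist (Y \<omega>) b"
  then have "AE \<omega> in M. Y \<omega> \<in> {y. \<eta> \<le> dist y b}" by simp
  moreover have "closed {y. \<eta> \<le> dist y b}"
    by (intro closed_Collect_le continuous_intros)
  ultimately have "rv_support M Y \<subseteq> {y. \<eta> \<le> dist y b}"
    unfolding rv_support_def by (intro Inter_lower) simp
  with assms show False by auto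
qed

end

context random_sequence
begin

lemma blk_vec_in_blk_space: "blk_vec X p \<omega> \<in> blk_space p"
  unfolding blk_vec_def blk_space_def by auto

lemma borel_measurable_blk_dist_blk_vec [measurable]:
  "(\<lambda>\<omega>. blk_dist p (blk_vec X p \<omega>) c) \<in> borel_measurable M"
  by (rule borel_measurable_blk_dist) (simp add: blk_vec_def)

lemma in_blk_support_if_outside_null_balls:
  assumes p: "1 \<le> p" and D: "\<And>U. open U \<Longrightarrow> U \<noteq> {} \<Longrightarrow> \<exists>d\<in>D. d \<in> U"
    and x: "x \<in> blk_space p"
    and outside: "\<And>c q. c \<in> blk_grid p D \<Longrightarrow> q \<in> \<rat> \<Longrightarrow>
      (AE \<omega> in M. q \<le> blk_dist p (blk_vec X p \<omega>) c) \<Longrightarrow> q \<le> blk_dist p x c"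
  shows "x \<in> blk_support M X p"
  unfolding blk_support_def
proof (intro IntI InterI, clarify)
  fix C assume C: "blk_closed p C" "AE \<omega> in M. blk_vec X p \<omega> \<in> C"
  show "x \<in> C"
  proof (rule ccontr)
    assume "x \<notin> C"
    then obtain \<delta> where \<delta>: "0 < \<delta>" "\<forall>y\<in>C. \<delta> \<le> blk_dist p x y"
      using C(1) x unfolding blk_closed_def by (meson not_le)
    have "0 < \<delta> / (3 * p)" using \<delta>(1) p by simp
    then have "\<exists>d\<in>D. dist (x i) d < \<delta> / (3 * p)" for i
      using D[of "ball (x i) (\<delta> / (3 * p))"] by (auto simp: dist_commute)
    then obtain c where c: "c \<in> blk_grid p D" "blk_dist p x c < \<delta> / 3"
      using blk_grid_approx[of p D x "\<delta> / (3 * p)"] p by auto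
    obtain q where q: "q \<in> \<rat>" "\<delta> / 3 < q" "q < 2 * \<delta> / 3"
      using Rats_dense_in_real[of "\<delta> / 3" "2 * \<delta> / 3"] \<delta>(1) by auto
    have "AE \<omega> in M. q \<le> blk_dist p (blk_vec X p \<omega>) c"
      using C(2)
    proof eventually_elim
      case (elim \<omega>)
      have "\<delta> \<le> blk_dist p x (blk_vec X p \<omega>)" using \<delta>(2) elim by auto
      also have "\<dots> \<le> blk_dist p x c + blk_dist p c (blk_vec X p \<omega>)" by (rule blk_dist_triangle)
      finally show ?case using c q by (simp add: blk_dist_commute)
    qed
    with c(1) q(1) have "q \<le> blk_dist p x c" by (rule outside)
    with c(2) q(2) show False by simp
  qed
qed (use x in auto)

lemma AE_blk_vec_in_blk_support:
  assumes p: "1 \<le> p"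
  shows "AE \<omega> in M. blk_vec X p \<omega> \<in> blk_support M X p"
proof -
  obtain D :: "'b set" where D: "countable D" "\<And>U. open U \<Longrightarrow> U \<noteq> {} \<Longrightarrow> \<exists>d\<in>D. d \<in> U"
    by (rule countable_dense_setE) blast
  \<comment> \<open>the complement of the support is covered by the countably many null balls indexed by \<open>T\<close>\<close>
  define T where
    "T = {cq \<in> blk_grid p D \<times> \<rat>. AE \<omega> in M. snd cq \<le> blk_dist p (blk_vec X p \<omega>) (fst cq)}"
  have "countable T"
    unfolding T_def by (rule countable_subset[of _ "blk_grid p D \<times> \<rat>"])
      (auto intro: countable_blk_grid D(1) countable_rat)
  then have "AE \<omega> in M. \<forall>cq\<in>T. snd cq \<le> blk_dist p (blk_vec X p \<omega>) (fst cq)"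
    by (rule AE_ball_countable'[rotated]) (auto simp: T_def)
  then show ?thesis
  proof eventually_elim
    case (elim \<omega>)
    show ?case
      using p D(2) blk_vec_in_blk_space
      by (rule in_blk_support_if_outside_null_balls) (use elim in \<open>auto simp: T_def\<close>)
  qed
qed

lemma blk_support_nonempty: "1 \<le> p \<Longrightarrow> blk_support M X p \<noteq> {}"
  using eventually_happens'[OF ae_filter_bot AE_blk_vec_in_blk_support] by blast

lemma prob_blk_ball_pos:
  assumes x: "x \<in> blk_support M X p" and xc: "blk_dist p x c < R"
  shows "0 < prob {\<omega>\<in>space M. blk_dist p (blk_vec X p \<omega>) c < R}"
proof (rule ccontr)
  assume "\<not> ?thesis"
  then have null: "prob {\<omega>\<in>space M. blk_dist p (blk_vec X p \<omega>) c < R} = 0"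
    using measure_nonneg[of M "{\<omega>\<in>space M. blk_dist p (blk_vec X p \<omega>) c < R}"] by linarith
  define C where "C = {y\<in>blk_space p. R \<le> blk_dist p y c}"
  have "blk_closed p C"
    unfolding blk_closed_def
  proof (intro conjI ballI impI)
    fix y assume y: "y \<in> blk_space p" "\<forall>\<delta>>0. \<exists>z\<in>C. blk_dist p y z < \<delta>"
    have "R \<le> blk_dist p y c + \<delta>" if \<delta>: "0 < \<delta>" for \<delta>
    proof -
      obtain z where "z \<in> C" "blk_dist p y z < \<delta>" using y(2) \<delta> by blast
      moreover have "blk_dist p z c \<le> blk_dist p z y + blk_dist p y c" by (rule blk_dist_triangle)
      ultimately show ?thesis by (simp add: C_def blk_dist_commute)
    qed
    then show "y \<in> C" using y(1) field_le_epsilon unfolding C_def by blast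
  qed (auto simp: C_def)
  moreover have "AE \<omega> in M. blk_vec X p \<omega> \<in> C"
  proof -
    have "AE \<omega> in M. \<not> blk_dist p (blk_vec X p \<omega>) c < R"
      by (subst AE_iff_measurable[OF _ refl]) (use null in \<open>auto simp: emeasure_eq_measure\<close>)
    then show ?thesis by eventually_elim (auto simp: C_def blk_vec_in_blk_space)
  qed
  ultimately have "x \<in> C" using x unfolding blk_support_def by auto
  with xc show False by (simp add: C_def)
qed

lemma rho_le_prob:
  assumes "c \<in> blk_support M X p"
  shows "rho M X p d \<le> prob {\<omega>\<in>space M. blk_dist p (blk_vec X p \<omega>) c \<le> d}"
  unfolding rho_def by (rule cINF_lower) (use assms in \<open>auto intro!: bdd_belowI2[where m = 0]\<close>)

lemma rho_le_1: "1 \<le> p \<Longrightarrow> rho M X p d \<le> 1"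
  using blk_support_nonempty[of p] rho_le_prob[of _ p d] by (meson ex_in_conv order_trans prob_le_1)

lemma rho_nonneg: "1 \<le> p \<Longrightarrow> 0 \<le> rho M X p d"
  unfolding rho_def by (rule cINF_greatest) (auto simp: blk_support_nonempty)

lemma exists_blk_support_near_rv_support:
  assumes r: "1 \<le> r" and b: "b \<in> rv_support M (X 1)" and \<eta>: "0 < \<eta>"
  obtains x where "x \<in> blk_support M X r" "dist (x 0) b < \<eta>"
proof -
  have "\<exists>\<omega>. blk_vec X r \<omega> \<in> blk_support M X r \<and> dist (X 1 \<omega>) b < \<eta>"
  proof (rule ccontr)
    assume "\<not> ?thesis"
    then have "AE \<omega> in M. blk_vec X r \<omega> \<in> blk_support M X r \<longrightarrow> \<eta> \<le> dist (X 1 \<omega>) b"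
      by (auto simp: not_less)
    then have "AE \<omega> in M. \<eta> \<le> dist (X 1 \<omega>) b"
      using AE_blk_vec_in_blk_support[OF r] by eventually_elim auto
    with not_AE_far_from_rv_support[OF b \<eta>] show False by blast
  qed
  moreover have "blk_vec X r \<omega> 0 = X 1 \<omega>" for \<omega>
    using r by (simp add: blk_vec_def)
  ultimately show ?thesis using that by metis
qed

definition blk_separated :: "nat \<Rightarrow> real \<Rightarrow> (nat \<Rightarrow> 'b) set \<Rightarrow> bool" where
  "blk_separated p e T \<longleftrightarrow> (\<forall>c\<in>T. \<forall>c'\<in>T. c \<noteq> c' \<longrightarrow> e < blk_dist p c c')"

lemma card_mult_rho_le_1:
  assumes T: "finite T" "T \<subseteq> blk_support M X p" "blk_separated p (2 * e) T"
  shows "real (card T) * rho M X p e \<le> 1"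
proof -
  define E where "E c = {\<omega>\<in>space M. blk_dist p (blk_vec X p \<omega>) c \<le> e}" for c
  have E_ev: "E c \<in> events" for c
    unfolding E_def by measurable
  have "disjoint_family_on E T"
    unfolding disjoint_family_on_def
  proof (intro ballI impI equals0I)
    fix c c' \<omega> assume "c \<in> T" "c' \<in> T" "c \<noteq> c'" "\<omega> \<in> E c \<inter> E c'"
    moreover have "blk_dist p c c' \<le> blk_dist p c (blk_vec X p \<omega>) + blk_dist p (blk_vec X p \<omega>) c'"
      by (rule blk_dist_triangle)
    ultimately show False
      using T(3) unfolding blk_separated_def E_def by (force simp: blk_dist_commute)
  qed
  have "real (card T) * rho M X p e \<le> (\<Sum>c\<in>T. prob (E c))"
    by (rule sum_bounded_below) (use T(2) in \<open>auto simp: E_def intro: rho_le_prob\<close>)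
  also have "\<dots> = prob (\<Union>c\<in>T. E c)"
    by (rule finite_measure_finite_Union[symmetric])
      (use T(1) \<open>disjoint_family_on E T\<close> E_ev in auto)
  also have "\<dots> \<le> 1" by (rule prob_le_1)
  finally show ?thesis .
qed

text \<open>A maximal separated subset of the support is a net; maximal ones exist because
  the bound above caps the cardinality of separated sets.\<close>
lemma exists_finite_blk_net:
  assumes e: "0 < e" and \<rho>: "0 < rho M X p e"
  obtains S where "finite S" "S \<subseteq> blk_support M X p" "real (card S) * rho M X p e \<le> 1"
    "\<And>x. x \<in> blk_support M X p \<Longrightarrow> \<exists>c\<in>S. blk_dist p x c \<le> 2 * e"
proof -
  define Q where "Q n \<longleftrightarrow>
    (\<exists>T. finite T \<and> T \<subseteq> blk_support M X p \<and> blk_separated p (2 * e) T \<and> card T = n)" for n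
  have "Q 0" unfolding Q_def by (rule exI[of _ "{}"]) (auto simp: blk_separated_def)
  moreover have "n \<le> nat \<lceil>1 / rho M X p e\<rceil>" if "Q n" for n
  proof -
    obtain T where "finite T" "T \<subseteq> blk_support M X p" "blk_separated p (2 * e) T" "card T = n"
      using \<open>Q n\<close> unfolding Q_def by blast
    then have "real n * rho M X p e \<le> 1" using card_mult_rho_le_1 by blast
    then have "real n \<le> 1 / rho M X p e" using \<rho> by (simp add: field_simps)
    then show ?thesis by linarith
  qed
  ultimately obtain n where n: "Q n" "\<And>n'. Q n' \<Longrightarrow> n' \<le> n"
    using Nat.ex_has_greatest_nat[of Q 0] by blast
  then obtain S where S: "finite S" "S \<subseteq> blk_support M X p" "blk_separated p (2 * e) S" "card S = n"
    unfolding Q_def by blast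
  have "\<exists>c\<in>S. blk_dist p x c \<le> 2 * e" if x: "x \<in> blk_support M X p" for x
  proof (rule ccontr)
    assume "\<not> ?thesis"
    then have far: "\<forall>c\<in>S. 2 * e < blk_dist p x c" by auto
    then have "x \<notin> S" using e by fastforce
    moreover have "blk_separated p (2 * e) (insert x S)"
      using S(3) far unfolding blk_separated_def by (auto simp: blk_dist_commute)
    ultimately have "Q (Suc n)"
      unfolding Q_def using S x by (intro exI[of _ "insert x S"]) auto
    then show False using n(2) by fastforce
  qed
  with S card_mult_rho_le_1[OF S(1-3)] that show ?thesis by blast
qed

end

section \<open>Stationary sequences\<close>

locale stationary_sequence = random_sequence +
  assumes stationary: "stationary M X"
begin

lemma prob_shifted_block:
  assumes E: "E \<in> sets (PiM {..<k} (\<lambda>_. borel))"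
  shows "prob {\<omega>\<in>space M. (\<lambda>i\<in>{..<k}. X (s + i) \<omega>) \<in> E}
       = prob {\<omega>\<in>space M. (\<lambda>i\<in>{..<k}. X i \<omega>) \<in> E}"
proof -
  have "prob {\<omega>\<in>space M. (\<lambda>i\<in>{..<k}. X (t + i) \<omega>) \<in> E}
      = measure (distr M (PiM {..<k} (\<lambda>_. borel)) (\<lambda>\<omega>. \<lambda>i\<in>{..<k}. X (t + i) \<omega>)) E" for t
    using measure_distr[OF measurable_restrict E, of "\<lambda>i \<omega>. X (t + i) \<omega>" M]
    by (simp add: vimage_def Int_def conj_commute)
  from this[of s] this[of 0] stationary show ?thesis
    unfolding stationary_def by simp
qed

lemma prob_block_near_shift: "prob (block_near M X s p c d) = prob (block_near M X t p c d)"
proof -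
  let ?E = "{f\<in>space (PiM {..<p} (\<lambda>_. borel::'b measure)). blk_dist p f c \<le> d}"
  have "(\<lambda>f. blk_dist p f c) \<in> borel_measurable (PiM {..<p} (\<lambda>_. borel::'b measure))"
    by (intro borel_measurable_blk_dist measurable_component_singleton) simp
  then have E: "?E \<in> sets (PiM {..<p} (\<lambda>_. borel))" by measurable
  have "block_near M X s p c d = {\<omega>\<in>space M. (\<lambda>i\<in>{..<p}. X (s + i) \<omega>) \<in> ?E}" for s
  proof -
    have "blk_dist p (\<lambda>i\<in>{..<p}. X (s + i) \<omega>) c = blk_dist p (\<lambda>i. X (s + i) \<omega>) c" for \<omega>
      by (rule blk_dist_cong) simp
    then show ?thesis by (auto simp: block_near_def space_PiM)
  qed
  then show ?thesis using prob_shifted_block[OF E, of s] prob_shifted_block[OF E, of t] by simp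
qed

lemma prob_X_in_shift:
  assumes "S \<in> sets borel"
  shows "prob {\<omega>\<in>space M. X s \<omega> \<in> S} = prob {\<omega>\<in>space M. X t \<omega> \<in> S}"
proof -
  let ?E = "{f\<in>space (PiM {..<1::nat} (\<lambda>_. borel::'b measure)). f 0 \<in> S}"
  have "(\<lambda>f. f 0) \<in> measurable (PiM {..<1::nat} (\<lambda>_. borel::'b measure)) borel"
    by (rule measurable_component_singleton) simp
  from measurable_sets[OF this assms] have E: "?E \<in> sets (PiM {..<1::nat} (\<lambda>_. borel))"
    by (simp add: vimage_def Int_def conj_commute)
  have "{\<omega>\<in>space M. X s \<omega> \<in> S} = {\<omega>\<in>space M. (\<lambda>i\<in>{..<1::nat}. X (s + i) \<omega>) \<in> ?E}" for s
    by (auto simp: space_PiM)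
  then show ?thesis using prob_shifted_block[OF E, of s] prob_shifted_block[OF E, of t] by simp
qed

lemma AE_X_in_rv_support: "AE \<omega> in M. X i \<omega> \<in> rv_support M (X 1)"
proof -
  let ?S = "rv_support M (X 1)"
  have S: "?S \<in> sets borel" using closed_rv_support by (rule borel_closed)
  have ev: "{\<omega>\<in>space M. X j \<omega> \<in> ?S} \<in> events" for j
    using measurable_sets[OF measurable_X S, of j] by (simp add: vimage_def Int_def conj_commute)
  have AE_iff: "(AE \<omega> in M. X j \<omega> \<in> ?S) \<longleftrightarrow> prob {\<omega>\<in>space M. X j \<omega> \<in> ?S} = 1" for j
  proof -
    have "(AE \<omega> in M. X j \<omega> \<in> ?S) \<longleftrightarrow> (AE \<omega> in M. \<omega> \<in> {\<omega>\<in>space M. X j \<omega> \<in> ?S})"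
      by (rule AE_cong_simp) (auto simp: simp_implies_def)
    with AE_in_set_eq_1[OF ev[of j]] show ?thesis by simp
  qed
  show ?thesis
    using AE_iff[of 1] AE_iff[of i] AE_in_rv_support[of "X 1"] prob_X_in_shift[OF S, of i 1] by simp
qed

lemma blk_support_coord_in_rv_support:
  assumes x: "x \<in> blk_support M X p" and i: "i < p"
  shows "x i \<in> rv_support M (X 1)"
proof -
  define C where "C = {y\<in>blk_space p. \<forall>i<p. y i \<in> rv_support M (X 1)}"
  have "blk_closed p C"
    unfolding blk_closed_def
  proof (intro conjI ballI impI)
    fix y assume y: "y \<in> blk_space p" "\<forall>\<delta>>0. \<exists>z\<in>C. blk_dist p y z < \<delta>"
    have "y j \<in> rv_support M (X 1)" if j: "j < p" for j
    proof (rule closed_approachable[OF closed_rv_support, THEN iffD1], intro allI impI)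
      fix e :: real assume "0 < e"
      then obtain z where "z \<in> C" "blk_dist p y z < e" using y(2) by blast
      moreover have "norm (y j - z j) \<le> blk_dist p y z" using j by (rule norm_le_blk_dist)
      ultimately show "\<exists>z\<in>rv_support M (X 1). dist z (y j) < e"
        using j unfolding C_def by (auto simp: dist_norm norm_minus_commute intro!: bexI[of _ "z j"])
    qed
    then show "y \<in> C" using y(1) unfolding C_def by auto
  qed (auto simp: C_def)
  moreover have "AE \<omega> in M. blk_vec X p \<omega> \<in> C"
  proof -
    have "AE \<omega> in M. \<forall>i\<in>{..<p}. X (i + 1) \<omega> \<in> rv_support M (X 1)"
      by (intro AE_ball_countable' AE_X_in_rv_support) auto
    then show ?thesis by eventually_elim (auto simp: C_def blk_space_def blk_vec_def)
  qed
  ultimately have "x \<in> C" using x unfolding blk_support_def by auto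
  with i show ?thesis unfolding C_def by auto
qed

lemma exists_blk_grid_near_blk_support:
  assumes p: "1 \<le> p" and F: "rv_support M (X 1) \<subseteq> (\<Union>f\<in>F. ball f (\<delta> / (2 * real p)))"
    and x: "x \<in> blk_support M X p"
  obtains c where "c \<in> blk_grid p F" "0 < prob {\<omega>\<in>space M. blk_dist p (blk_vec X p \<omega>) c < \<delta> / 2}"
    "prob {\<omega>\<in>space M. blk_dist p (blk_vec X p \<omega>) c < \<delta> / 2}
      \<le> prob {\<omega>\<in>space M. blk_dist p (blk_vec X p \<omega>) x \<le> \<delta>}"
proof -
  have "\<exists>f\<in>F. dist (x i) f < \<delta> / (2 * real p)" if "i < p" for i
    using blk_support_coord_in_rv_support[OF x that] F by (force simp: dist_commute)
  then obtain c where c: "c \<in> blk_grid p F" "blk_dist p x c < \<delta> / 2"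
    using blk_grid_approx[of p F x "\<delta> / (2 * real p)"] p by auto
  have "{\<omega>\<in>space M. blk_dist p (blk_vec X p \<omega>) c < \<delta> / 2}
      \<subseteq> {\<omega>\<in>space M. blk_dist p (blk_vec X p \<omega>) x \<le> \<delta>}"
  proof clarify
    fix \<omega> assume "\<omega> \<in> space M" "blk_dist p (blk_vec X p \<omega>) c < \<delta> / 2"
    moreover have "blk_dist p (blk_vec X p \<omega>) x \<le> blk_dist p (blk_vec X p \<omega>) c + blk_dist p c x"
      by (rule blk_dist_triangle)
    ultimately show "blk_dist p (blk_vec X p \<omega>) x \<le> \<delta>"
      using c(2) by (simp add: blk_dist_commute)
  qed
  then have "prob {\<omega>\<in>space M. blk_dist p (blk_vec X p \<omega>) c < \<delta> / 2}
      \<le> prob {\<omega>\<in>space M. blk_dist p (blk_vec X p \<omega>) x \<le> \<delta>}"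
    by (rule finite_measure_mono) measurable
  with c prob_blk_ball_pos[OF x c(2)] that show ?thesis by blast
qed

lemma rho_le_prob_block_near:
  assumes "c \<in> blk_support M X p"
  shows "rho M X p d \<le> prob (block_near M X s p c d)"
proof -
  have "blk_dist p (blk_vec X p \<omega>) c = blk_dist p (\<lambda>i. X (1 + i) \<omega>) c" for \<omega>
    by (rule blk_dist_cong) (simp add: blk_vec_def)
  then have "prob {\<omega>\<in>space M. blk_dist p (blk_vec X p \<omega>) c \<le> d} = prob (block_near M X 1 p c d)"
    by (simp add: block_near_def)
  with rho_le_prob[OF assms, of d] prob_block_near_shift[of 1 p c d s] show ?thesis by simp
qed

text \<open>Blocks of length \<open>r\<close> starting at \<open>2jr + 1\<close> are separated by gaps of length \<open>r\<close>, so
  each new block is \<open>\<beta>\<^sub>r\<close>-almost independent of all earlier ones.\<close>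
lemma prob_blocks_miss_Suc_le:
  assumes r: "1 \<le> r" and c: "c \<in> blk_support M X r"
  shows "prob {\<omega>\<in>space M. \<forall>i<Suc j. \<omega> \<notin> block_near M X (2*i*r + 1) r c d}
    \<le> prob {\<omega>\<in>space M. \<forall>i<j. \<omega> \<notin> block_near M X (2*i*r + 1) r c d} * (1 - rho M X r d)
      + beta_mix M X r"
proof -
  define Q where "Q = {\<omega>\<in>space M. \<forall>i<j. \<omega> \<notin> block_near M X (2*i*r + 1) r c d}"
  define H where "H = block_near M X (2*j*r + 1) r c d"
  have split: "{\<omega>\<in>space M. \<forall>i<Suc j. \<omega> \<notin> block_near M X (2*i*r + 1) r c d} = Q \<inter> (space M - H)"
    unfolding Q_def H_def by (auto simp: less_Suc_eq)
  have miss: "prob (space M - H) \<le> 1 - rho M X r d"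
    using prob_compl[OF block_near_in_events] rho_le_prob_block_near[OF c] unfolding H_def by simp
  have \<beta>: "0 \<le> beta_mix M X r" by (rule beta_mix_nonneg)
  show ?thesis
  proof (cases "j = 0")
    case True
    then have "Q = space M" unfolding Q_def by simp
    then have "Q \<inter> (space M - H) = space M - H" by auto
    with split miss \<beta> \<open>Q = space M\<close> show ?thesis by (simp add: Q_def prob_space)
  next
    case False
    define l where "l = 2*j*r - r"
    have "r \<le> j * r" using False by (cases j) auto
    moreover have "2*j*r = 2*(j*r)" by simp
    ultimately have l: "1 \<le> l" "l + r = 2*j*r"
      using r unfolding l_def by linarith+
    have "Q \<in> gen_sigma M X {1..l}"
      unfolding Q_def l_def by (rule blocks_miss_in_gen_sigma)
    moreover have "space M - H \<in> gen_sigma M X {l + r..}"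
    proof -
      interpret sigma_algebra "space M" "gen_sigma M X {l + r..}" by (rule sigma_algebra_gen_sigma)
      have "H \<in> gen_sigma M X {l + r..}"
        unfolding H_def using l(2) by (intro block_near_in_gen_sigma) auto
      then show ?thesis by (rule compl_sets)
    qed
    ultimately have "prob (Q \<inter> (space M - H)) \<le> prob Q * prob (space M - H) + beta_mix M X r"
      by (rule prob_Int_le_beta_mix[OF l(1)])
    also have "\<dots> \<le> prob Q * (1 - rho M X r d) + beta_mix M X r"
      using miss by (intro add_mono mult_left_mono) auto
    finally show ?thesis using split unfolding Q_def by simp
  qed
qed

lemma prob_all_blocks_miss:
  assumes r: "1 \<le> r" and c: "c \<in> blk_support M X r"
  shows "prob {\<omega>\<in>space M. \<forall>j<m. \<omega> \<notin> block_near M X (2*j*r + 1) r c d}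
     \<le> (1 - rho M X r d) ^ m + m * beta_mix M X r"
proof (induction m)
  case 0
  show ?case by (simp add: prob_space)
next
  case (Suc j)
  define \<rho> where "\<rho> = rho M X r d"
  define \<beta> where "\<beta> = beta_mix M X r"
  have \<rho>: "0 \<le> \<rho>" "\<rho> \<le> 1" unfolding \<rho>_def using rho_nonneg[OF r] rho_le_1[OF r] by auto
  have \<beta>: "0 \<le> \<beta>" unfolding \<beta>_def by (rule beta_mix_nonneg)
  have "prob {\<omega>\<in>space M. \<forall>i<Suc j. \<omega> \<notin> block_near M X (2*i*r + 1) r c d}
      \<le> prob {\<omega>\<in>space M. \<forall>i<j. \<omega> \<notin> block_near M X (2*i*r + 1) r c d} * (1 - \<rho>) + \<beta>"
    unfolding \<rho>_def \<beta>_def by (rule prob_blocks_miss_Suc_le[OF r c])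
  also have "\<dots> \<le> ((1 - \<rho>) ^ j + j * \<beta>) * (1 - \<rho>) + \<beta>"
    using Suc.IH \<rho> unfolding \<rho>_def \<beta>_def by (intro add_mono mult_right_mono) auto
  also have "\<dots> \<le> (1 - \<rho>) ^ Suc j + Suc j * \<beta>"
    using \<rho> \<beta> mult_left_le[of "1 - \<rho>" "j * \<beta>"] by (simp add: algebra_simps)
  finally show ?case unfolding \<rho>_def \<beta>_def .
qed

end

section \<open>Real estimates\<close>

lemma one_minus_power_le_exp:
  fixes \<rho> :: real
  assumes "0 \<le> \<rho>" "\<rho> \<le> 1"
  shows "(1 - \<rho>) ^ m \<le> exp (- real m * \<rho>)"
proof -
  have "(1 - \<rho>) ^ m \<le> exp (- \<rho>) ^ m"
    using assms exp_ge_add_one_self[of "- \<rho>"] by (intro power_mono) auto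
  then show ?thesis by (simp add: exp_of_nat_mult[symmetric])
qed

lemma nat_ceiling_bounds:
  fixes E :: real
  assumes "0 \<le> E"
  shows "E \<le> real (nat \<lceil>E\<rceil>)" "real (nat \<lceil>E\<rceil>) < E + 1"
  using assms ceiling_correct[of E] by auto

lemma nat_ceiling_mult_le:
  fixes E P C \<beta> \<rho> :: real
  assumes E: "1 \<le> E" and \<beta>: "0 \<le> \<beta>" "E * E * \<beta> \<le> P" and C: "0 < C" "C * P \<le> \<rho> * E"
  shows "real (nat \<lceil>E\<rceil>) * \<beta> \<le> 2 / C * \<rho>"
proof -
  have "real (nat \<lceil>E\<rceil>) \<le> 2 * E" using nat_ceiling_bounds(2)[of E] E by linarith
  then have "real (nat \<lceil>E\<rceil>) * \<beta> \<le> 2 * E * \<beta>" using \<beta>(1) by (rule mult_right_mono)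
  also have "\<dots> \<le> 2 * P / E" using E \<beta>(2) by (simp add: field_simps)
  also have "\<dots> \<le> 2 / C * \<rho>" using E C by (simp add: field_simps)
  finally show ?thesis .
qed

lemma exp_minus_nat_ceiling_div_2_le:
  fixes a P C \<rho>2 \<rho>4 :: real
  assumes a: "1 \<le> a" "a \<le> P" and C: "4 \<le> C" and \<rho>2: "0 \<le> \<rho>2" "C * P \<le> \<rho>2 * exp a"
    and \<rho>4: "C * P \<le> \<rho>4 * exp a"
  shows "exp (- real (nat \<lceil>exp a\<rceil> div 2) * \<rho>2) \<le> \<rho>4 / C"
proof -
  define k where "k = nat \<lceil>exp a\<rceil>"
  have "2 \<le> exp a" using exp_ge_add_one_self[of a] a(1) by linarith
  moreover have "exp a \<le> real k" unfolding k_def by (rule nat_ceiling_bounds(1)) simp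
  moreover have "real k \<le> 2 * real (k div 2) + 1" by linarith
  ultimately have "exp a / 4 \<le> real (k div 2)" by linarith
  then have "exp a / 4 * \<rho>2 \<le> real (k div 2) * \<rho>2" using \<rho>2(1) by (rule mult_right_mono)
  moreover have "4 * P \<le> C * P" using C a by (intro mult_right_mono) auto
  then have "P \<le> exp a / 4 * \<rho>2" using \<rho>2(2) by (simp add: field_simps)
  ultimately have "exp (- real (k div 2) * \<rho>2) \<le> exp (- P)" by simp
  also have "exp (- P) \<le> P / exp a"
  proof -
    have "exp a \<le> exp P" using a(2) by simp
    also have "\<dots> \<le> P * exp P" using a by simp
    finally show ?thesis by (simp add: field_simps exp_minus)
  qed
  also have "\<dots> \<le> \<rho>4 / C" using \<rho>4 C by (simp add: field_simps)
  finally show ?thesis unfolding k_def .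
qed

lemma block_sizes_bound_le:
  fixes m :: nat and b C \<beta> \<rho>2 \<rho>4 :: real
  assumes m: "1 \<le> m" and b: "1 < b" and C: "4 \<le> C"
    and \<rho>4: "C \<le> \<rho>4 * exp (real m powr b) / real m powr (1 + b)"
    and \<rho>2: "C \<le> \<rho>2 * exp (real m powr b) / real m powr (1 + b)"
    and \<beta>: "0 \<le> \<beta>" "exp (2 * real m powr b) / (real m)\<^sup>2 * \<beta> \<le> 1"
  shows "(real (nat \<lceil>exp (real m powr b)\<rceil>) ^ 2 * \<beta>
      + real (nat \<lceil>exp (real m powr b)\<rceil>) * exp (- real (nat \<lceil>exp (real m powr b)\<rceil> div 2) * \<rho>2))
      / (real (nat \<lceil>exp (real m powr b)\<rceil>) * \<rho>4) \<le> 3 / C"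
proof -
  define a where "a = real m powr b"
  define P where "P = real m powr (1 + b)"
  define k where "k = nat \<lceil>exp a\<rceil>"
  have a: "1 \<le> a" unfolding a_def using m b by (intro ge_one_powr_ge_zero) auto
  have aP: "a \<le> P" unfolding a_def P_def using m b by (intro powr_mono) auto
  have mP: "(real m)\<^sup>2 \<le> P"
    using powr_mono[of 2 "1 + b" "real m"] m b by (simp add: P_def powr_realpow)
  have "0 < P" using a aP by linarith
  then have \<rho>4': "C * P \<le> \<rho>4 * exp a" and \<rho>2': "C * P \<le> \<rho>2 * exp a"
    using \<rho>4 \<rho>2 unfolding a_def P_def by (simp_all add: field_simps)
  have "0 < C * P" using C \<open>0 < P\<close> by simp
  then have "0 < \<rho>4 * exp a" "0 < \<rho>2 * exp a" using \<rho>4' \<rho>2' by linarith+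
  then have "0 < \<rho>4" "0 \<le> \<rho>2" by (simp_all add: zero_less_mult_iff)
  have "exp a * exp a * \<beta> \<le> P"
    using \<beta>(2) mP m unfolding a_def by (simp add: exp_add[symmetric] field_simps)
  then have mix: "real k * \<beta> \<le> 2 / C * \<rho>4"
    unfolding k_def using a C \<beta>(1) \<rho>4' by (intro nat_ceiling_mult_le) auto
  have tail: "exp (- real (k div 2) * \<rho>2) \<le> \<rho>4 / C"
    unfolding k_def using a aP C \<open>0 \<le> \<rho>2\<close> \<rho>2' \<rho>4' by (rule exp_minus_nat_ceiling_div_2_le)
  have "0 < real k" unfolding k_def using nat_ceiling_bounds(1)[of "exp a"] by simp
  then have "(real k ^ 2 * \<beta> + real k * exp (- real (k div 2) * \<rho>2)) / (real k * \<rho>4)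
      = (real k * \<beta> + exp (- real (k div 2) * \<rho>2)) / \<rho>4"
    using \<open>0 < \<rho>4\<close> by (simp add: field_simps power2_eq_square)
  also have "\<dots> \<le> (2 / C * \<rho>4 + \<rho>4 / C) / \<rho>4"
    using mix tail \<open>0 < \<rho>4\<close> by (intro divide_right_mono add_mono) auto
  also have "\<dots> = 3 / C"
    using \<open>0 < \<rho>4\<close> by (simp add: field_simps)
  finally show ?thesis unfolding k_def a_def .
qed

lemma exists_block_sizes:
  fixes \<rho>2 \<rho>4 \<beta> :: "nat \<Rightarrow> real" and b \<alpha> :: real
  assumes b: "1 < b" and \<alpha>: "0 < \<alpha>" and \<beta>: "\<And>m. 0 \<le> \<beta> m"
    and \<rho>4: "filterlim (\<lambda>m. \<rho>4 m * exp (real m powr b) / real m powr (1 + b)) at_top sequentially"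
    and \<rho>2: "filterlim (\<lambda>m. \<rho>2 m * exp (real m powr b) / real m powr (1 + b)) at_top sequentially"
    and \<beta>_lim: "(\<lambda>m. exp (2 * real m powr b) / (real m)\<^sup>2 * \<beta> m) \<longlonglongrightarrow> 0"
  obtains k r :: nat where "1 \<le> k" "1 \<le> r"
    "(real k ^ 2 * \<beta> r + real k * exp (- real (k div 2) * \<rho>2 r)) / (real k * \<rho>4 r) \<le> \<alpha>"
proof -
  define C where "C = max 4 (3 / \<alpha>)"
  have "\<forall>\<^sub>F m in sequentially. C \<le> \<rho>4 m * exp (real m powr b) / real m powr (1 + b)
      \<and> C \<le> \<rho>2 m * exp (real m powr b) / real m powr (1 + b)
      \<and> exp (2 * real m powr b) / (real m)\<^sup>2 * \<beta> m < 1 \<and> 1 \<le> m"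
    using \<rho>4 \<rho>2 order_tendstoD(2)[OF \<beta>_lim zero_less_one]
    by (intro eventually_conj eventually_ge_at_top) (auto simp: filterlim_at_top)
  then obtain m where m: "C \<le> \<rho>4 m * exp (real m powr b) / real m powr (1 + b)"
    "C \<le> \<rho>2 m * exp (real m powr b) / real m powr (1 + b)"
    "exp (2 * real m powr b) / (real m)\<^sup>2 * \<beta> m < 1" "1 \<le> m"
    unfolding eventually_sequentially by blast
  have "4 \<le> C" unfolding C_def by simp
  have "3 / C \<le> 3 / (3 / \<alpha>)" using \<alpha> by (intro divide_left_mono) (auto simp: C_def)
  then have "3 / C \<le> \<alpha>" by simp
  have "exp (2 * real m powr b) / (real m)\<^sup>2 * \<beta> m \<le> 1" using m(3) by simp
  note bound = order_trans[OF block_sizes_bound_le[OF m(4) b \<open>4 \<le> C\<close> m(1,2) \<beta> this] \<open>3 / C \<le> \<alpha>\<close>]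
  have "0 < real (nat \<lceil>exp (real m powr b)\<rceil>)"
    using nat_ceiling_bounds(1)[of "exp (real m powr b)"] by simp
  then have "1 \<le> nat \<lceil>exp (real m powr b)\<rceil>" by linarith
  from that[OF this m(4) bound] show ?thesis .
qed

locale compact_stationary_sequence = stationary_sequence +
  assumes compact_rv_support: "compact (rv_support M (X 1))"
begin

lemma rho_pos:
  assumes p: "1 \<le> p" and \<delta>: "0 < \<delta>"
  shows "0 < rho M X p \<delta>"
proof -
  have "0 < \<delta> / (2 * real p)" using p \<delta> by simp
  then obtain F where F: "finite F" "rv_support M (X 1) \<subseteq> (\<Union>f\<in>F. ball f (\<delta> / (2 * real p)))"
    using compact_rv_support unfolding compact_eq_totally_bounded by metis
  define P where "P c = prob {\<omega>\<in>space M. blk_dist p (blk_vec X p \<omega>) c < \<delta> / 2}" for c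
  define G where "G = {c \<in> blk_grid p F. 0 < P c}"
  have near: "\<exists>c\<in>G. P c \<le> prob {\<omega>\<in>space M. blk_dist p (blk_vec X p \<omega>) x \<le> \<delta>}"
    if "x \<in> blk_support M X p" for x
    using exists_blk_grid_near_blk_support[OF p F(2) that] unfolding G_def P_def by blast
  have "finite G" using finite_blk_grid[OF F(1)] unfolding G_def by auto
  moreover have "G \<noteq> {}" using near blk_support_nonempty[OF p] by blast
  ultimately have "0 < Min (P ` G)" by (auto simp: G_def)
  also have "Min (P ` G) \<le> rho M X p \<delta>"
    unfolding rho_def
  proof (rule cINF_greatest)
    fix x assume "x \<in> blk_support M X p"
    then obtain c where "c \<in> G" "P c \<le> prob {\<omega>\<in>space M. blk_dist p (blk_vec X p \<omega>) x \<le> \<delta>}"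
      using near by blast
    with \<open>finite G\<close> show "Min (P ` G) \<le> prob {\<omega>\<in>space M. blk_dist p (blk_vec X p \<omega>) x \<le> \<delta>}"
      by (meson Min_le finite_imageI image_eqI order_trans)
  qed (rule blk_support_nonempty[OF p])
  finally show ?thesis .
qed

lemma sets_hausdorff_dist_sample_le:
  assumes n: "1 \<le> n"
  shows "{\<omega>\<in>space M. hausdorff_dist (sample X n \<omega>) (rv_support M (X 1)) \<le> \<epsilon>} \<in> events"
proof -
  let ?S = "rv_support M (X 1)"
  obtain D where D: "countable D" "D \<subseteq> ?S" "?S \<subseteq> closure D"
    using separable by blast
  have fin: "finite (sample X n \<omega>)" "sample X n \<omega> \<noteq> {}" for \<omega>
    using n by (auto simp: sample_def)
  have dense: "(\<forall>b\<in>?S. infdist b A \<le> \<epsilon>) \<longleftrightarrow> (\<forall>b\<in>D. infdist b A \<le> \<epsilon>)" for A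
  proof
    assume "\<forall>b\<in>D. infdist b A \<le> \<epsilon>"
    then have "closure D \<subseteq> {b. infdist b A \<le> \<epsilon>}"
      by (intro closure_minimal closed_Collect_le continuous_intros) auto
    with D(3) show "\<forall>b\<in>?S. infdist b A \<le> \<epsilon>" by auto
  qed (use D(2) in auto)
  have X_closed: "{\<omega>\<in>space M. X i \<omega> \<in> C} \<in> events" if "closed C" for C i
    using measurable_sets[OF measurable_X borel_closed[OF that], of i]
    by (simp add: vimage_def Int_def conj_commute)
  have "{\<omega>\<in>space M. hausdorff_dist (sample X n \<omega>) ?S \<le> \<epsilon>}
      = {\<omega>\<in>space M. (\<forall>i\<in>{1..n}. X i \<omega> \<in> {y. infdist y ?S \<le> \<epsilon>})
                    \<and> (\<forall>b\<in>D. \<exists>i\<in>{1..n}. X i \<omega> \<in> cball b \<epsilon>)}"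
    unfolding hausdorff_dist_le_iff[OF fin compact_rv_support rv_support_nonempty] dense
    unfolding infdist_le_iff_finite[OF fin]
    by (auto simp: sample_def dist_commute)
  also have "\<dots> \<in> events"
    by (intro sets.sets_Collect_conj sets.sets_Collect_finite_All sets.sets_Collect_countable_All'
        sets.sets_Collect_finite_Ex X_closed closed_cball closed_Collect_le continuous_intros
        finite_atLeastAtMost D(1))
  finally show ?thesis .
qed

lemma hausdorff_dist_sample_le:
  assumes d: "0 \<le> d" and k: "1 \<le> k" and r: "1 \<le> r" and n: "k * r \<le> n"
    and net: "\<And>x. x \<in> blk_support M X r \<Longrightarrow> \<exists>c\<in>S. blk_dist r x c \<le> d"
    and in_support: "\<forall>i\<in>{1..n}. X i \<omega> \<in> rv_support M (X 1)"
    and near: "\<forall>c\<in>S. \<exists>j<k div 2. \<omega> \<in> block_near M X (2*j*r + 1) r c d"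
  shows "hausdorff_dist (sample X n \<omega>) (rv_support M (X 1)) \<le> 2 * d"
proof -
  have "1 \<le> n" by (rule order_trans[OF _ n]) (use k r in simp)
  then have fin: "finite (sample X n \<omega>)" "sample X n \<omega> \<noteq> {}"
    unfolding sample_def by auto
  have "infdist b (sample X n \<omega>) \<le> 2 * d" if b: "b \<in> rv_support M (X 1)" for b
  proof (rule field_le_epsilon)
    fix \<eta> :: real assume "0 < \<eta>"
    with r b obtain x where x: "x \<in> blk_support M X r" "dist (x 0) b < \<eta>"
      by (rule exists_blk_support_near_rv_support)
    obtain c where c: "c \<in> S" "blk_dist r x c \<le> d" using net[OF x(1)] by blast
    obtain j where j: "j < k div 2" "\<omega> \<in> block_near M X (2*j*r + 1) r c d"
      using near c(1) by blast
    have "dist (x 0) (c 0) \<le> d"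
      using norm_le_blk_dist[of 0 r x c] r c(2) by (simp add: dist_norm)
    moreover have "dist (X (2*j*r + 1) \<omega>) (c 0) \<le> d"
      using norm_le_blk_dist[of 0 r "\<lambda>i. X (2*j*r + 1 + i) \<omega>" c] r j(2)
      by (simp add: block_near_def dist_norm)
    moreover have "(2*j + 2) * r \<le> k * r" using j(1) by (intro mult_right_mono) auto
    then have "X (2*j*r + 1) \<omega> \<in> sample X n \<omega>"
      using n r unfolding sample_def by (intro imageI) (auto simp: algebra_simps)
    then have "infdist b (sample X n \<omega>) \<le> dist b (X (2*j*r + 1) \<omega>)"
      by (rule infdist_le)
    ultimately show "infdist b (sample X n \<omega>) \<le> 2 * d + \<eta>"
      using x(2) dist_triangle[of b "X (2*j*r + 1) \<omega>" "x 0"]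
        dist_triangle[of "x 0" "X (2*j*r + 1) \<omega>" "c 0"]
      by (simp add: dist_commute)
  qed
  moreover have "infdist a (rv_support M (X 1)) \<le> 2 * d" if "a \<in> sample X n \<omega>" for a
    using that in_support d by (auto simp: sample_def)
  ultimately show ?thesis
    unfolding hausdorff_dist_le_iff[OF fin compact_rv_support rv_support_nonempty] by blast
qed

lemma prob_hausdorff_dist_sample_gt_le_sum:
  assumes \<epsilon>: "0 < \<epsilon>" and k: "1 \<le> k" and r: "1 \<le> r" and n: "k * r \<le> n" and S: "finite S"
    and net: "\<And>x. x \<in> blk_support M X r \<Longrightarrow> \<exists>c\<in>S. blk_dist r x c \<le> \<epsilon> / 2"
  shows "prob {\<omega>\<in>space M. \<epsilon> < hausdorff_dist (sample X n \<omega>) (rv_support M (X 1))}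
    \<le> (\<Sum>c\<in>S. prob {\<omega>\<in>space M. \<forall>j<k div 2. \<omega> \<notin> block_near M X (2*j*r + 1) r c (\<epsilon> / 2)})"
proof -
  define miss where
    "miss c = {\<omega>\<in>space M. \<forall>j<k div 2. \<omega> \<notin> block_near M X (2*j*r + 1) r c (\<epsilon> / 2)}" for c
  have miss_ev: "miss c \<in> events" for c
    using blocks_miss_in_gen_sigma gen_sigma_subset_events unfolding miss_def by blast
  have "prob {\<omega>\<in>space M. \<epsilon> < hausdorff_dist (sample X n \<omega>) (rv_support M (X 1))}
      \<le> prob (\<Union>c\<in>S. miss c)"
  proof (rule finite_measure_mono_AE)
    have "AE \<omega> in M. \<forall>i\<in>{1..n}. X i \<omega> \<in> rv_support M (X 1)"
      by (intro AE_ball_countable' AE_X_in_rv_support) auto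
    then show "AE \<omega> in M. \<omega> \<in> {\<omega>\<in>space M. \<epsilon> < hausdorff_dist (sample X n \<omega>) (rv_support M (X 1))}
        \<longrightarrow> \<omega> \<in> (\<Union>c\<in>S. miss c)"
    proof eventually_elim
      case (elim \<omega>)
      show ?case
        using hausdorff_dist_sample_le[of "\<epsilon> / 2" k r n S \<omega>] elim \<epsilon> k r n net
        by (force simp: miss_def)
    qed
  qed (use S miss_ev in auto)
  also have "\<dots> \<le> (\<Sum>c\<in>S. prob (miss c))"
    by (rule measure_UNION_le) (use S miss_ev in auto)
  finally show ?thesis unfolding miss_def .
qed

lemma prob_hausdorff_dist_sample_gt_le:
  assumes \<epsilon>: "0 < \<epsilon>" and k: "1 \<le> k" and r: "1 \<le> r" and n: "k * r \<le> n"
  shows "prob {\<omega>\<in>space M. \<epsilon> < hausdorff_dist (sample X n \<omega>) (rv_support M (X 1))}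
    \<le> (real k ^ 2 * beta_mix M X r + real k * exp (- real (k div 2) * rho M X r (\<epsilon> / 2)))
        / (real k * rho M X r (\<epsilon> / 4))"
proof -
  define \<rho>2 where "\<rho>2 = rho M X r (\<epsilon> / 2)"
  define \<rho>4 where "\<rho>4 = rho M X r (\<epsilon> / 4)"
  define \<beta> where "\<beta> = beta_mix M X r"
  define B where "B = exp (- real (k div 2) * \<rho>2) + k * \<beta>"
  have \<rho>2: "0 \<le> \<rho>2" "\<rho>2 \<le> 1" unfolding \<rho>2_def using rho_nonneg[OF r] rho_le_1[OF r] by auto
  have \<rho>4: "0 < \<rho>4" unfolding \<rho>4_def using rho_pos[OF r] \<epsilon> by simp
  have \<beta>: "0 \<le> \<beta>" unfolding \<beta>_def by (rule beta_mix_nonneg)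
  obtain S where S: "finite S" "S \<subseteq> blk_support M X r" "real (card S) * \<rho>4 \<le> 1"
    and net: "\<And>x. x \<in> blk_support M X r \<Longrightarrow> \<exists>c\<in>S. blk_dist r x c \<le> \<epsilon> / 2"
    using exists_finite_blk_net[of "\<epsilon> / 4" r] \<epsilon> \<rho>4 unfolding \<rho>4_def by auto
  have "prob {\<omega>\<in>space M. \<epsilon> < hausdorff_dist (sample X n \<omega>) (rv_support M (X 1))}
    \<le> (\<Sum>c\<in>S. prob {\<omega>\<in>space M. \<forall>j<k div 2. \<omega> \<notin> block_near M X (2*j*r + 1) r c (\<epsilon> / 2)})"
    by (rule prob_hausdorff_dist_sample_gt_le_sum[OF \<epsilon> k r n S(1) net])
  also have "\<dots> \<le> (\<Sum>c\<in>S. B)"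
  proof (rule sum_mono)
    fix c assume "c \<in> S"
    then have "prob {\<omega>\<in>space M. \<forall>j<k div 2. \<omega> \<notin> block_near M X (2*j*r + 1) r c (\<epsilon> / 2)}
        \<le> (1 - \<rho>2) ^ (k div 2) + (k div 2) * \<beta>"
      unfolding \<rho>2_def \<beta>_def using S(2) by (intro prob_all_blocks_miss r) auto
    also have "\<dots> \<le> B"
      unfolding B_def using one_minus_power_le_exp[OF \<rho>2] \<beta>
      by (intro add_mono mult_right_mono) auto
    finally show "prob {\<omega>\<in>space M. \<forall>j<k div 2. \<omega> \<notin> block_near M X (2*j*r + 1) r c (\<epsilon> / 2)} \<le> B" .
  qed
  also have "\<dots> = real (card S) * B" by simp
  also have "\<dots> \<le> (1 / \<rho>4) * B"
    using S(3) \<rho>4 \<beta> unfolding B_def by (intro mult_right_mono) (auto simp: field_simps)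
  also have "\<dots> = (real k ^ 2 * \<beta> + real k * exp (- real (k div 2) * \<rho>2)) / (real k * \<rho>4)"
    using k \<rho>4 unfolding B_def by (simp add: field_simps power2_eq_square)
  finally show ?thesis unfolding \<rho>2_def \<rho>4_def \<beta>_def .
qed

lemma asympt_dense_rv_support:
  assumes b: "1 < b" and \<epsilon>0: "0 < \<epsilon>0"
    and growth: "\<And>\<epsilon>. 0 < \<epsilon> \<and> \<epsilon> < \<epsilon>0 \<Longrightarrow>
      filterlim (\<lambda>m::nat. rho M X m \<epsilon> * exp (real m powr b) / real m powr (1 + b)) at_top sequentially
      \<and> (\<lambda>m::nat. exp (2 * real m powr b) / (real m)\<^sup>2 * beta_mix M X m) \<longlonglongrightarrow> 0"
  shows "asympt_dense M X (rv_support M (X 1))"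
proof -
  show ?thesis
    unfolding asympt_dense_def
  proof (intro exI[of _ \<epsilon>0] conjI allI impI \<epsilon>0)
    fix \<epsilon> \<alpha> :: real assume \<epsilon>: "0 < \<epsilon> \<and> \<epsilon> < \<epsilon>0" and \<alpha>: "0 < \<alpha> \<and> \<alpha> < 1"
    have \<rho>4: "filterlim (\<lambda>m. rho M X m (\<epsilon> / 4) * exp (real m powr b) / real m powr (1 + b))
        at_top sequentially"
      and \<beta>: "(\<lambda>m. exp (2 * real m powr b) / (real m)\<^sup>2 * beta_mix M X m) \<longlonglongrightarrow> 0"
      using growth[of "\<epsilon> / 4"] \<epsilon> by auto
    have \<rho>2: "filterlim (\<lambda>m. rho M X m (\<epsilon> / 2) * exp (real m powr b) / real m powr (1 + b))
        at_top sequentially"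
      using growth[of "\<epsilon> / 2"] \<epsilon> by auto
    obtain k r where kr: "1 \<le> k" "1 \<le> r"
      "(real k ^ 2 * beta_mix M X r + real k * exp (- real (k div 2) * rho M X r (\<epsilon> / 2)))
        / (real k * rho M X r (\<epsilon> / 4)) \<le> \<alpha>"
      using \<alpha> exists_block_sizes[OF b _ beta_mix_nonneg \<rho>4 \<rho>2 \<beta>] by blast
    show "\<exists>n0. \<forall>n\<ge>n0.
        1 - \<alpha> \<le> prob {\<omega>\<in>space M. hausdorff_dist (sample X n \<omega>) (rv_support M (X 1)) \<le> \<epsilon>}"
    proof (intro exI[of _ "k * r"] allI impI)
      fix n assume n: "k * r \<le> n"
      have "1 \<le> n" by (rule order_trans[OF _ n]) (use kr in simp)
      have "prob {\<omega>\<in>space M. \<epsilon> < hausdorff_dist (sample X n \<omega>) (rv_support M (X 1))} \<le> \<alpha>"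
        using prob_hausdorff_dist_sample_gt_le[OF _ kr(1,2) n] \<epsilon> kr(3) by fastforce
      moreover have "{\<omega>\<in>space M. \<epsilon> < hausdorff_dist (sample X n \<omega>) (rv_support M (X 1))}
          = space M - {\<omega>\<in>space M. hausdorff_dist (sample X n \<omega>) (rv_support M (X 1)) \<le> \<epsilon>}"
        by auto
      ultimately show
        "1 - \<alpha> \<le> prob {\<omega>\<in>space M. hausdorff_dist (sample X n \<omega>) (rv_support M (X 1)) \<le> \<epsilon>}"
        using prob_compl[OF sets_hausdorff_dist_sample_le[OF \<open>1 \<le> n\<close>]] by simp
    qed
  qed
qed

end

theorem proposition4p3:
  fixes M :: "'a measure" and X :: "nat \<Rightarrow> 'a \<Rightarrow> 'b::euclidean_space" and \<MM> :: "'b set"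
  assumes "prob_space M"
    and "\<And>i. X i \<in> borel_measurable M"
    and "stationary M X"
    and "(\<lambda>n. beta_mix M X n) \<longlonglongrightarrow> 0"
    and "\<MM> = rv_support M (X 1)"
    and "compact \<MM>"
  shows "(\<forall>\<epsilon>>0. \<forall>n k r::nat. k \<ge> 1 \<and> r \<ge> 1 \<and> k * r \<le> n \<longrightarrow>
            measure M {\<omega>\<in>space M. hausdorff_dist (sample X n \<omega>) \<MM> > \<epsilon>}
              \<le> (real k ^ 2 * beta_mix M X r
                  + real k * exp (- real (k div 2) * rho M X r (\<epsilon> / 2)))
                / (real k * rho M X r (\<epsilon> / 4)))
       \<and> ((\<exists>b>1. \<exists>\<epsilon>0>0. \<forall>\<epsilon>. 0 < \<epsilon> \<and> \<epsilon> < \<epsilon>0 \<longrightarrow>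
              filterlim (\<lambda>m::nat. rho M X m \<epsilon> * exp (real m powr b) / real m powr (1 + b))
                at_top sequentially
            \<and> (\<lambda>m::nat. exp (2 * real m powr b) / (real m)\<^sup>2 * beta_mix M X m) \<longlonglongrightarrow> 0)
          \<longrightarrow> asympt_dense M X \<MM>)"
proof -
  interpret compact_stationary_sequence M X
    using assms
    by (simp add: compact_stationary_sequence_def compact_stationary_sequence_axioms_def
        stationary_sequence_def stationary_sequence_axioms_def
        random_sequence_def random_sequence_axioms_def)
  show ?thesis
    unfolding assms(5) using prob_hausdorff_dist_sample_gt_le asympt_dense_rv_support by blast
qed

end
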